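(* Let $G$ be a graph on $n\ge 3$ vertices, with an edge-colouring using exactly $r$ colours. Let $f:\binom{V(G)}{2}\to\mathbb{Z}_{\ge 0}$ be such that for all distinct $u,v\in V(G)$, there are $f(u,v)$ disjoint monochromatic super-paths connecting $u$ and $v$. Then \[ e(G)\ge\left\lceil\frac{w(f)}{n-2}\right\rceil+r-1. \]
   Context: All graphs are finite, simple and undirected. A super-path is a path of length at least two. Paths are called disjoint if they are internally vertex-disjoint. An edge-coloured path is monochromatic if all its edges have the same colour. For $f:\binom{V(G)}{2}\to\mathbb{Z}_{\ge 0}$ write $f(u,v)=f(\{u,v\})$, and define the weight $w(f)=\sum_{\{u,v\}\in\binom{V(G)}{2}} f(u,v)$. *)

theory Defs
  imports Complex_Main
begin

definition simple_graph :: "'a set \<Rightarrow> 'a set set \<Rightarrow> bool" where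
  "simple_graph V E \<longleftrightarrow> finite V \<and> (\<forall>e\<in>E. e \<subseteq> V \<and> card e = 2)"

definition is_path :: "'a set set \<Rightarrow> 'a list \<Rightarrow> bool" where
  "is_path E p \<longleftrightarrow> p \<noteq> [] \<and> distinct p \<and> (\<forall>i. Suc i < length p \<longrightarrow> {p ! i, p ! Suc i} \<in> E)"

definition path_edges :: "'a list \<Rightarrow> 'a set set" where
  "path_edges p = {{p ! i, p ! Suc i} | i. Suc i < length p}"

definition mono_super_path ::
  "'a set set \<Rightarrow> ('a set \<Rightarrow> 'c) \<Rightarrow> 'a \<Rightarrow> 'a \<Rightarrow> 'a list \<Rightarrow> bool" where
  "mono_super_path E col u v p \<longleftrightarrow>
     is_path E p \<and> length p \<ge> 3 \<and> hd p = u \<and> last p = v \<and>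
     (\<exists>c. \<forall>e\<in>path_edges p. col e = c)"

definition path_interior :: "'a list \<Rightarrow> 'a set" where
  "path_interior p = set (butlast (tl p))"

definition has_disjoint_mono_super_paths ::
  "'a set set \<Rightarrow> ('a set \<Rightarrow> 'c) \<Rightarrow> 'a \<Rightarrow> 'a \<Rightarrow> nat \<Rightarrow> bool" where
  "has_disjoint_mono_super_paths E col u v k \<longleftrightarrow>
     (\<exists>P :: nat \<Rightarrow> 'a list.
        (\<forall>i<k. mono_super_path E col u v (P i)) \<and>
        (\<forall>i<k. \<forall>j<k. i \<noteq> j \<longrightarrow> path_interior (P i) \<inter> path_interior (P j) = {}))"

definition weight :: "'a set \<Rightarrow> ('a set \<Rightarrow> nat) \<Rightarrow> nat" where
  "weight V f = (\<Sum>e\<in>{e. e \<subseteq> V \<and> card e = 2}. f e)"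

end

theory Submission
  imports Defs
begin

text \<open>
  Count slots ((u, x), v): an edge ux read from u, together with a third vertex v; there are
  2 e(G) (n - 2) of them. Every path from u to v occupies the slot formed by its first edge and v,
  and disjointness of interiors makes these 2 w(f) slots distinct. Fix a colour c0 that is spanning
  (met by every vertex) if some colour is. Every other colour c owns at least 2 (n - 2) unoccupied
  slots, no slot being owned by two colours. If c has two leaves (vertices on exactly one c-edge),
  take the slots whose edge is a c-edge ending at a c-leaf; if c is not spanning, the c-slots whose
  third vertex meets no c-edge; otherwise, at every vertex x, for each c-edge xy and a fixed c0-edge
  xy', one of ((y, x), y') and ((y', x), y), because both being occupied would force the path
  y x y' to be monochromatic.
\<close>

lemma mem_path_interior_iff:
  "x \<in> path_interior P \<longleftrightarrow> (\<exists>i. 0 < i \<and> i < length P - 1 \<and> P ! i = x)"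
proof -
  have nth: "butlast (tl P) ! j = P ! Suc j" if "j < length P - 2" for j
    using that by (simp add: nth_butlast nth_tl)
  have "x \<in> path_interior P \<longleftrightarrow> (\<exists>j < length P - 2. butlast (tl P) ! j = x)"
    by (simp add: path_interior_def in_set_conv_nth numeral_2_eq_2)
  also have "\<dots> \<longleftrightarrow> (\<exists>j < length P - 2. P ! Suc j = x)"
    using nth by auto
  also have "\<dots> \<longleftrightarrow> (\<exists>i. 0 < i \<and> i < length P - 1 \<and> P ! i = x)"
  proof
    assume "\<exists>j < length P - 2. P ! Suc j = x"
    then show "\<exists>i. 0 < i \<and> i < length P - 1 \<and> P ! i = x" by force
  next
    assume "\<exists>i. 0 < i \<and> i < length P - 1 \<and> P ! i = x"
    then obtain i where "0 < i" "i < length P - 1" "P ! i = x" by blast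
    then show "\<exists>j < length P - 2. P ! Suc j = x" by (intro exI[of _ "i - 1"]) auto
  qed
  finally show ?thesis .
qed

lemma path_interior_rev: "path_interior (rev P) = path_interior P"
proof -
  have "tl (rev P) = rev (butlast P)" by (metis butlast_rev rev_rev_ident)
  then show ?thesis by (simp add: path_interior_def butlast_tl)
qed

lemma path_edges_rev_subset: "path_edges (rev P) \<subseteq> path_edges P"
proof
  fix e assume "e \<in> path_edges (rev P)"
  then obtain i where i: "Suc i < length P" "e = {rev P ! i, rev P ! Suc i}"
    unfolding path_edges_def by auto
  define j where "j = length P - 2 - i"
  have "Suc j < length P" "rev P ! i = P ! Suc j" "rev P ! Suc i = P ! j"
    using i(1) by (auto simp: j_def rev_nth Suc_diff_Suc numeral_2_eq_2)
  then show "e \<in> path_edges P"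
    unfolding path_edges_def i(2) by (auto simp: insert_commute)
qed

lemma is_path_rev:
  assumes "is_path E P"
  shows "is_path E (rev P)"
  unfolding is_path_def
proof (intro conjI allI impI)
  show "rev P \<noteq> []" "distinct (rev P)" using assms unfolding is_path_def by simp_all
  have "path_edges P \<subseteq> E" using assms unfolding is_path_def path_edges_def by blast
  then have "path_edges (rev P) \<subseteq> E" using path_edges_rev_subset by blast
  then show "{rev P ! i, rev P ! Suc i} \<in> E" if "Suc i < length (rev P)" for i
    using that unfolding path_edges_def by blast
qed

lemma mono_super_path_rev:
  assumes "mono_super_path E col u v P"
  shows "mono_super_path E col v u (rev P)"
proof -
  have P: "is_path E P" "3 \<le> length P" "hd P = u" "last P = v"
    using assms unfolding mono_super_path_def by auto
  obtain c where "\<forall>e\<in>path_edges P. col e = c"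
    using assms unfolding mono_super_path_def by blast
  then have "\<forall>e\<in>path_edges (rev P). col e = c"
    using path_edges_rev_subset by blast
  then show ?thesis
    using P is_path_rev unfolding mono_super_path_def by (auto simp: hd_rev last_rev)
qed

lemma mono_super_path_nth:
  assumes "mono_super_path E col u v P"
  shows "3 \<le> length P" "distinct P" "P ! 0 = u" "P ! (length P - 1) = v"
    and "Suc i < length P \<Longrightarrow> {P ! i, P ! Suc i} \<in> E \<and> col {P ! i, P ! Suc i} = col {u, P ! 1}"
proof -
  have P: "is_path E P" "3 \<le> length P" "hd P = u" "last P = v"
    using assms unfolding mono_super_path_def by auto
  obtain c where c: "\<And>i. Suc i < length P \<Longrightarrow> col {P ! i, P ! Suc i} = c"
    using assms unfolding mono_super_path_def path_edges_def by blast
  have "P \<noteq> []" using P(2) by auto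
  then show "3 \<le> length P" "distinct P" "P ! 0 = u" "P ! (length P - 1) = v"
    using P by (simp_all add: is_path_def hd_conv_nth last_conv_nth)
  show "Suc i < length P \<Longrightarrow> {P ! i, P ! Suc i} \<in> E \<and> col {P ! i, P ! Suc i} = col {u, P ! 1}"
    using P(1,2) c[of i] c[of 0] \<open>P ! 0 = u\<close> by (simp add: is_path_def)
qed

lemma mono_super_path_second_vertex:
  assumes "mono_super_path E col u v P"
  shows "{u, P ! 1} \<in> E" "P ! 1 \<in> path_interior P" "P ! 1 \<noteq> v"
proof -
  note P = mono_super_path_nth[OF assms]
  show "{u, P ! 1} \<in> E" using P(1,3) P(5)[of 0] by simp
  show "P ! 1 \<in> path_interior P"
    unfolding mem_path_interior_iff using P(1) by (intro exI[of _ 1]) simp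
  have "1 < length P" "length P - 1 < length P" "1 \<noteq> length P - 1" using P(1) by simp_all
  then show "P ! 1 \<noteq> v" using P(2,4) nth_eq_iff_index_eq by metis
qed

lemma mono_super_path_third_vertex:
  assumes "mono_super_path E col u v P"
  shows "{P ! 1, P ! 2} \<in> E" "col {P ! 1, P ! 2} = col {u, P ! 1}" "P ! 2 \<noteq> u"
proof -
  note P = mono_super_path_nth[OF assms]
  show "{P ! 1, P ! 2} \<in> E" "col {P ! 1, P ! 2} = col {u, P ! 1}"
    using P(1) P(5)[of 1] by (simp_all add: numeral_2_eq_2)
  have "0 < length P" "2 < length P" using P(1) by linarith+
  then show "P ! 2 \<noteq> u" using P(2,3) nth_eq_iff_index_eq by fastforce
qed

lemma mono_super_path_penultimate_vertex:
  assumes "mono_super_path E col u v P"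
  shows "{P ! (length P - 2), v} \<in> E" "col {P ! (length P - 2), v} = col {u, P ! 1}"
    "P ! (length P - 2) \<in> path_interior P"
proof -
  note P = mono_super_path_nth[OF assms]
  have "Suc (length P - 2) = length P - 1" using P(1) by simp
  then show "{P ! (length P - 2), v} \<in> E" "col {P ! (length P - 2), v} = col {u, P ! 1}"
    using P(1,4) P(5)[of "length P - 2"] by simp_all
  show "P ! (length P - 2) \<in> path_interior P"
    unfolding mem_path_interior_iff using P(1) by (intro exI[of _ "length P - 2"]) simp
qed

lemma mono_super_path_length_3:
  assumes "mono_super_path E col u v P" "P ! (length P - 2) = P ! 1"
  shows "length P = 3"
proof -
  note P = mono_super_path_nth(1,2)[OF assms(1)]
  have "length P - 2 < length P" "1 < length P" using P(1) by simp_all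
  then have "length P - 2 = 1" using assms(2) P(2) nth_eq_iff_index_eq by metis
  then show ?thesis by simp
qed

definition disjoint_mono_super_paths ::
  "'a set set \<Rightarrow> ('a set \<Rightarrow> 'c) \<Rightarrow> 'a \<Rightarrow> 'a \<Rightarrow> nat \<Rightarrow> (nat \<Rightarrow> 'a list) \<Rightarrow> bool" where
  "disjoint_mono_super_paths E col u v k P \<longleftrightarrow>
     (\<forall>i<k. mono_super_path E col u v (P i)) \<and>
     (\<forall>i<k. \<forall>j<k. i \<noteq> j \<longrightarrow> path_interior (P i) \<inter> path_interior (P j) = {})"

lemma has_disjoint_mono_super_paths_iff:
  "has_disjoint_mono_super_paths E col u v k \<longleftrightarrow> (\<exists>P. disjoint_mono_super_paths E col u v k P)"
  unfolding has_disjoint_mono_super_paths_def disjoint_mono_super_paths_def ..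

lemma disjoint_mono_super_paths_rev:
  "disjoint_mono_super_paths E col u v k P \<Longrightarrow>
   disjoint_mono_super_paths E col v u k (\<lambda>i. rev (P i))"
  unfolding disjoint_mono_super_paths_def by (simp add: mono_super_path_rev path_interior_rev)

lemma obtain_symmetric_choice:
  assumes "\<And>u v. u \<in> V \<Longrightarrow> v \<in> V \<Longrightarrow> u \<noteq> v \<Longrightarrow> \<exists>x. Q u v x"
    and "\<And>u v x. Q u v x \<Longrightarrow> Q v u (g x)"
    and "\<And>x. g (g x) = x"
  obtains F where "\<And>u v. u \<in> V \<Longrightarrow> v \<in> V \<Longrightarrow> u \<noteq> v \<Longrightarrow> Q u v (F u v)"
    and "\<And>u v. u \<noteq> v \<Longrightarrow> F v u = g (F u v)"
proof
  define h where "h u v = (SOME x. Q u v x)" for u v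
  \<comment> \<open>orient each pair {u, v} towards an arbitrarily chosen element\<close>
  define F where "F u v = (if (SOME a. a \<in> {u, v}) = u then h u v else g (h v u))" for u v
  have F_cases: "F u v = h u v \<and> F v u = g (h u v) \<or> F u v = g (h v u) \<and> F v u = h v u"
    if "u \<noteq> v" for u v
  proof -
    have "(SOME a. a \<in> {u, v}) \<in> {u, v}" by (rule someI[of _ u]) simp
    moreover have "{v, u} = {u, v}" by blast
    ultimately show ?thesis using that unfolding F_def by auto
  qed
  show "Q u v (F u v)" if "u \<in> V" "v \<in> V" "u \<noteq> v" for u v
  proof -
    have "Q u v (h u v)" "Q v u (h v u)"
      using assms(1) that unfolding h_def by (metis someI_ex)+
    then show ?thesis using F_cases[OF \<open>u \<noteq> v\<close>] assms(2) by auto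
  qed
  show "F v u = g (F u v)" if "u \<noteq> v" for u v
    using F_cases[OF that] assms(3) by auto
qed

lemma sum_pairs_eq_double_sum:
  fixes g :: "'a set \<Rightarrow> nat"
  assumes "finite S" "\<And>e. e \<in> S \<Longrightarrow> card e = 2"
  shows "(\<Sum>(u, v)\<in>{(u, v). {u, v} \<in> S}. g {u, v}) = 2 * (\<Sum>e\<in>S. g e)"
proof -
  let ?Q = "{(u, v). {u, v} \<in> S}"
  have "finite (\<Union>S)" using assms by (metis card.infinite finite_Union zero_neq_numeral)
  moreover have "?Q \<subseteq> (\<Union>S) \<times> (\<Union>S)" by auto
  ultimately have fin: "finite ?Q" by (meson finite_SigmaI finite_subset)
  have fibre: "{p \<in> ?Q. {fst p, snd p} = e} = {(a, b), (b, a)}" if "e = {a, b}" "a \<noteq> b" "e \<in> S" for e a b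
    using that by (auto simp: doubleton_eq_iff insert_commute)
  have img: "(\<lambda>p. {fst p, snd p}) ` ?Q \<subseteq> S" by auto
  have "(\<Sum>(u, v)\<in>?Q. g {u, v}) = (\<Sum>p\<in>?Q. g {fst p, snd p})"
    by (simp add: case_prod_beta)
  also have "\<dots> = (\<Sum>e\<in>S. \<Sum>p\<in>{p \<in> ?Q. {fst p, snd p} = e}. g {fst p, snd p})"
    using sum.group[OF fin assms(1) img, of "\<lambda>p. g {fst p, snd p}"] by simp
  also have "\<dots> = (\<Sum>e\<in>S. 2 * g e)"
  proof (rule sum.cong)
    fix e assume "e \<in> S"
    then obtain a b where "e = {a, b}" "a \<noteq> b" using assms(2) by (meson card_2_iff)
    then show "(\<Sum>p\<in>{p \<in> ?Q. {fst p, snd p} = e}. g {fst p, snd p}) = 2 * g e"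
      using fibre \<open>e \<in> S\<close> by (simp add: insert_commute)
  qed simp
  finally show ?thesis by (simp add: sum_distrib_left)
qed

lemma sum_ge_double_card_minus_one:
  fixes g :: "'a \<Rightarrow> nat"
  assumes "finite S" "\<And>x. x \<in> S \<Longrightarrow> 1 \<le> g x"
    and "\<And>x y. x \<in> S \<Longrightarrow> y \<in> S \<Longrightarrow> g x = 1 \<Longrightarrow> g y = 1 \<Longrightarrow> x = y"
  shows "2 * card S - 1 \<le> sum g S"
proof -
  define L where "L = {x \<in> S. g x = 1}"
  have "L \<subseteq> S" "finite L" using assms(1) by (auto simp: L_def)
  have "card L \<le> 1" using assms(3) unfolding L_def by (auto intro: card_le_Suc0_iff_eq[THEN iffD2] simp: assms(1))
  have "sum g L = card L" by (simp add: L_def)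
  moreover have "2 * card (S - L) \<le> sum g (S - L)"
    using sum_mono[of "S - L" "\<lambda>_. 2" g] assms(2) by (force simp: L_def)
  moreover have "sum g S = sum g L + sum g (S - L)"
    using assms(1) \<open>L \<subseteq> S\<close> by (metis sum.subset_diff add.commute)
  moreover have "card S = card L + card (S - L)"
    using assms(1) \<open>L \<subseteq> S\<close> by (metis card_Diff_subset card_mono le_add_diff_inverse \<open>finite L\<close>)
  ultimately show ?thesis using \<open>card L \<le> 1\<close> by linarith
qed

lemma card_add_le_of_disjoint_subsets:
  assumes "finite C" "A \<subseteq> C" "B \<subseteq> C" "A \<inter> B = {}"
  shows "card A + card B \<le> card C"
proof -
  have "card A + card B = card (A \<union> B)"
    using assms by (metis card_Un_disjoint finite_subset)
  also have "\<dots> \<le> card C" using assms by (intro card_mono) auto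
  finally show ?thesis .
qed

lemma ceiling_divide_bound:
  fixes w e k r :: nat
  assumes "0 < k" "w + k * (r - 1) \<le> e * k"
  shows "\<lceil>real w / real k\<rceil> + int r - 1 \<le> int e"
proof -
  have "real w \<le> real k * (real e - real r + 1)"
    using assms by (cases r) (auto simp: algebra_simps simp flip: of_nat_mult of_nat_add)
  then have "real w / real k \<le> real_of_int (int e - int r + 1)"
    using assms(1) by (simp add: divide_le_eq mult.commute)
  then have "\<lceil>real w / real k\<rceil> \<le> int e - int r + 1"
    by (rule ceiling_le)
  then show ?thesis by linarith
qed

locale mono_path_system =
  fixes V :: "'a set" and E :: "'a set set" and col :: "'a set \<Rightarrow> 'c" and f :: "'a set \<Rightarrow> nat"
    and paths :: "'a \<Rightarrow> 'a \<Rightarrow> nat \<Rightarrow> 'a list"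
  assumes simple: "simple_graph V E"
    and paths_family: "\<And>u v. u \<in> V \<Longrightarrow> v \<in> V \<Longrightarrow> u \<noteq> v \<Longrightarrow>
                  disjoint_mono_super_paths E col u v (f {u, v}) (paths u v)"
    and paths_swap: "\<And>u v. u \<noteq> v \<Longrightarrow> paths v u = (\<lambda>i. rev (paths u v i))"
begin

lemma finite_V: "finite V"
  using simple by (simp add: simple_graph_def)

lemma edge_endpoints:
  assumes "{u, x} \<in> E"
  shows "u \<in> V \<and> x \<in> V \<and> u \<noteq> x"
proof -
  have "{u, x} \<subseteq> V" "card {u, x} = 2"
    using simple assms unfolding simple_graph_def by blast+
  then show ?thesis by (auto simp: card_insert_if split: if_splits)
qed

lemma finite_E: "finite E"
proof -
  have "E \<subseteq> Pow V" using simple by (auto simp: simple_graph_def)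
  then show ?thesis using finite_V by (meson finite_Pow_iff finite_subset)
qed

lemma path_mono_super_path:
  "u \<in> V \<Longrightarrow> v \<in> V \<Longrightarrow> u \<noteq> v \<Longrightarrow> i < f {u, v} \<Longrightarrow> mono_super_path E col u v (paths u v i)"
  using paths_family by (simp add: disjoint_mono_super_paths_def)

lemma paths_disjoint:
  "u \<in> V \<Longrightarrow> v \<in> V \<Longrightarrow> u \<noteq> v \<Longrightarrow> i < f {u, v} \<Longrightarrow> j < f {u, v} \<Longrightarrow> i \<noteq> j \<Longrightarrow>
   path_interior (paths u v i) \<inter> path_interior (paths u v j) = {}"
  using paths_family by (simp add: disjoint_mono_super_paths_def)

definition slots :: "(('a \<times> 'a) \<times> 'a) set" where
  "slots = {((u, x), v). {u, x} \<in> E \<and> v \<in> V \<and> v \<noteq> u \<and> v \<noteq> x}"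

lemma finite_slots: "finite slots"
proof -
  have "slots \<subseteq> (V \<times> V) \<times> V" unfolding slots_def by (auto dest: edge_endpoints)
  then show ?thesis by (rule finite_subset) (simp add: finite_V)
qed

lemma card_slots: "card slots = 2 * card E * (card V - 2)"
proof -
  define arcs where "arcs = {(u, x). {u, x} \<in> E}"
  have arcs: "u \<in> V \<and> x \<in> V \<and> u \<noteq> x" if "(u, x) \<in> arcs" for u x
    using that edge_endpoints by (simp add: arcs_def)
  have "arcs \<subseteq> V \<times> V" using arcs by auto
  then have "finite arcs" by (rule finite_subset) (simp add: finite_V)
  have "card arcs = 2 * card E"
    using sum_pairs_eq_double_sum[OF finite_E, of "\<lambda>_. 1"] simple
    unfolding arcs_def simple_graph_def by simp
  have "slots = Sigma arcs (\<lambda>(u, x). V - {u, x})"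
    unfolding slots_def arcs_def by auto
  then have "card slots = (\<Sum>(u, x)\<in>arcs. card (V - {u, x}))"
    using \<open>finite arcs\<close> finite_V by (simp add: case_prod_beta)
  also have "\<dots> = (\<Sum>(u, x)\<in>arcs. card V - 2)"
    using arcs finite_V by (intro sum.cong refl) (clarsimp simp: card_Diff_subset numeral_2_eq_2)
  finally show ?thesis using \<open>card arcs = 2 * card E\<close> by simp
qed

definition path_indices :: "(('a \<times> 'a) \<times> nat) set" where
  "path_indices = {((u, v), i). u \<in> V \<and> v \<in> V \<and> u \<noteq> v \<and> i < f {u, v}}"

definition path_slot :: "('a \<times> 'a) \<times> nat \<Rightarrow> ('a \<times> 'a) \<times> 'a" where
  "path_slot = (\<lambda>((u, v), i). ((u, paths u v i ! 1), v))"

definition used_slots :: "(('a \<times> 'a) \<times> 'a) set" where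
  "used_slots = path_slot ` path_indices"

lemma card_path_indices: "card path_indices = 2 * weight V f"
proof -
  define S where "S = {e. e \<subseteq> V \<and> card e = 2}"
  define pairs where "pairs = {(u, v). {u, v} \<in> S}"
  have pairs_iff: "(u, v) \<in> pairs \<longleftrightarrow> u \<in> V \<and> v \<in> V \<and> u \<noteq> v" for u v
    unfolding pairs_def S_def by (cases "u = v") auto
  have "finite S"
    by (rule finite_subset[of _ "Pow V"]) (auto simp: S_def finite_V)
  have "pairs \<subseteq> V \<times> V" using pairs_iff by auto
  then have "finite pairs" by (rule finite_subset) (simp add: finite_V)
  have "path_indices = Sigma pairs (\<lambda>p. {..<f {fst p, snd p}})"
    unfolding path_indices_def by (auto simp: pairs_iff)
  then have "card path_indices = (\<Sum>p\<in>pairs. f {fst p, snd p})"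
    using \<open>finite pairs\<close> by simp
  also have "\<dots> = 2 * weight V f"
    using sum_pairs_eq_double_sum[OF \<open>finite S\<close>, of f]
    unfolding S_def pairs_def weight_def by (simp add: case_prod_beta)
  finally show ?thesis .
qed

lemma inj_on_path_slot: "inj_on path_slot path_indices"
proof (rule inj_onI)
  fix q q' assume q: "q \<in> path_indices" and q': "q' \<in> path_indices"
    and same: "path_slot q = path_slot q'"
  obtain u v i u' v' j where ij: "q = ((u, v), i)" "q' = ((u', v'), j)"
    by (metis prod.collapse)
  have uv': "u' = u" "v' = v" and second: "paths u v i ! 1 = paths u v j ! 1"
    using same unfolding ij path_slot_def by auto
  have uv: "u \<in> V" "v \<in> V" "u \<noteq> v" "i < f {u, v}" "j < f {u, v}"
    using q q' unfolding ij uv' path_indices_def by simp_all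
  have "paths u v i ! 1 \<in> path_interior (paths u v i)"
    using mono_super_path_second_vertex(2)[OF path_mono_super_path[OF uv(1-4)]] .
  moreover have "paths u v i ! 1 \<in> path_interior (paths u v j)"
    using mono_super_path_second_vertex(2)[OF path_mono_super_path[OF uv(1-3,5)]] second by simp
  ultimately have "i = j" using paths_disjoint[OF uv] by auto
  then show "q = q'" using ij uv' by simp
qed

lemma card_used_slots: "card used_slots = 2 * weight V f"
  unfolding used_slots_def by (simp add: card_image inj_on_path_slot card_path_indices)

lemma used_slotE:
  assumes "((u, x), v) \<in> used_slots"
  obtains i where "u \<in> V" "v \<in> V" "u \<noteq> v" "i < f {u, v}" "paths u v i ! 1 = x"
  using assms unfolding used_slots_def path_indices_def path_slot_def by auto

lemma used_slots_subset: "used_slots \<subseteq> slots"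
proof safe
  fix u x v assume "((u, x), v) \<in> used_slots"
  then obtain i where i: "u \<in> V" "v \<in> V" "u \<noteq> v" "i < f {u, v}" "paths u v i ! 1 = x"
    by (rule used_slotE)
  then show "((u, x), v) \<in> slots"
    using mono_super_path_second_vertex(1,3)[OF path_mono_super_path[OF i(1-4)]]
    unfolding slots_def by auto
qed

definition col_nbrs :: "'c \<Rightarrow> 'a \<Rightarrow> 'a set" where
  "col_nbrs c x = {y. {x, y} \<in> E \<and> col {x, y} = c}"

lemma mem_col_nbrs_iff: "y \<in> col_nbrs c x \<longleftrightarrow> {x, y} \<in> E \<and> col {x, y} = c"
  by (simp add: col_nbrs_def)

lemma col_nbrs_subset: "col_nbrs c x \<subseteq> V"
  unfolding col_nbrs_def using edge_endpoints by blast

lemma finite_col_nbrs: "finite (col_nbrs c x)"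
  using col_nbrs_subset finite_V by (rule finite_subset)

lemma used_slot_not_leaf:
  assumes "((u, x), v) \<in> used_slots"
  shows "col_nbrs (col {u, x}) x \<noteq> {u}"
proof -
  obtain i where i: "u \<in> V" "v \<in> V" "u \<noteq> v" "i < f {u, v}" "paths u v i ! 1 = x"
    using assms by (rule used_slotE)
  note P = mono_super_path_third_vertex[OF path_mono_super_path[OF i(1-4)]]
  have "paths u v i ! 2 \<in> col_nbrs (col {u, x}) x"
    using P(1,2) i(5) by (simp add: mem_col_nbrs_iff)
  then show ?thesis using P(3) by auto
qed

lemma used_slot_target_has_col_nbr:
  assumes "((u, x), v) \<in> used_slots"
  shows "col_nbrs (col {u, x}) v \<noteq> {}"
proof -
  obtain i where i: "u \<in> V" "v \<in> V" "u \<noteq> v" "i < f {u, v}" "paths u v i ! 1 = x"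
    using assms by (rule used_slotE)
  define P where "P = paths u v i"
  note P = mono_super_path_penultimate_vertex[OF path_mono_super_path[OF i(1-4)], folded P_def]
  have "P ! (length P - 2) \<in> col_nbrs (col {u, x}) v"
    using P(1,2) i(5) by (simp add: mem_col_nbrs_iff P_def insert_commute)
  then show ?thesis by auto
qed

text \<open>Both slots come from the same path, read in the two directions, so that path is y x z.\<close>
lemma used_slot_pair_same_colour:
  assumes "((y, x), z) \<in> used_slots" "((z, x), y) \<in> used_slots"
  shows "col {y, x} = col {x, z}"
proof -
  obtain i where i: "y \<in> V" "z \<in> V" "y \<noteq> z" "i < f {y, z}" "paths y z i ! 1 = x"
    using assms(1) by (rule used_slotE)
  obtain j where j: "j < f {z, y}" "paths z y j ! 1 = x"
    using assms(2) by (rule used_slotE)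
  have j': "j < f {y, z}" using j(1) by (simp add: insert_commute)
  define P Q where "P = paths y z i" and "Q = paths y z j"
  have P: "mono_super_path E col y z P" and Q: "mono_super_path E col y z Q"
    using path_mono_super_path[OF i(1-4)] path_mono_super_path[OF i(1-3) j'] by (simp_all add: P_def Q_def)
  have "rev Q ! 1 = x" using j(2) paths_swap[OF i(3)] by (simp add: Q_def)
  then have Qx: "Q ! (length Q - 2) = x"
    using mono_super_path_nth(1)[OF Q] by (simp add: rev_nth numeral_2_eq_2)
  have "x \<in> path_interior P" "x \<in> path_interior Q"
    using mono_super_path_second_vertex(2)[OF P] mono_super_path_penultimate_vertex(3)[OF Q] i(5) Qx
    by (simp_all add: P_def)
  then have "P = Q" using paths_disjoint[OF i(1-4) j'] unfolding P_def Q_def by (cases "i = j") auto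
  then have "length P = 3" and "P ! 1 = x"
    using mono_super_path_length_3[OF P] Qx i(5) by (simp_all add: P_def)
  then show ?thesis
    using mono_super_path_penultimate_vertex(2)[OF P] by (simp add: insert_commute)
qed

definition has_two_leaves :: "'c \<Rightarrow> bool" where
  "has_two_leaves c \<longleftrightarrow>
     (\<exists>x y. x \<noteq> y \<and> card (col_nbrs c x) = 1 \<and> card (col_nbrs c y) = 1)"

definition spanning :: "'c \<Rightarrow> bool" where
  "spanning c \<longleftrightarrow> (\<forall>x\<in>V. col_nbrs c x \<noteq> {})"

lemma sum_card_col_nbrs_ge:
  assumes "\<not> has_two_leaves c" "W \<subseteq> V" "\<And>y. y \<in> W \<Longrightarrow> col_nbrs c y \<noteq> {}"
  shows "2 * card W - 1 \<le> (\<Sum>y\<in>W. card (col_nbrs c y))"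
proof (rule sum_ge_double_card_minus_one)
  show "finite W" using assms(2) finite_V by (rule finite_subset)
  show "1 \<le> card (col_nbrs c y)" if "y \<in> W" for y
    using assms(3)[OF that] finite_col_nbrs by (simp add: Suc_le_eq card_gt_0_iff)
  show "x = y" if "card (col_nbrs c x) = 1" "card (col_nbrs c y) = 1" for x y
    using assms(1) that unfolding has_two_leaves_def by blast
qed

definition leaf_slots :: "'c \<Rightarrow> (('a \<times> 'a) \<times> 'a) set" where
  "leaf_slots c = {((u, x), v). ((u, x), v) \<in> slots \<and> col {u, x} = c \<and> col_nbrs c x = {u}}"

definition isolated_slots :: "'c \<Rightarrow> (('a \<times> 'a) \<times> 'a) set" where
  "isolated_slots c = {((u, x), v). ((u, x), v) \<in> slots \<and> col {u, x} = c \<and> col_nbrs c v = {}}"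

definition switch_slots :: "'c \<Rightarrow> 'c \<Rightarrow> (('a \<times> 'a) \<times> 'a) set" where
  "switch_slots c c' = {((u, x), v). ((u, x), v) \<in> slots - used_slots \<and>
     {x, v} \<in> E \<and> {col {u, x}, col {x, v}} = {c, c'}}"

lemma leaf_slots_unused: "leaf_slots c \<subseteq> slots - used_slots"
  unfolding leaf_slots_def using used_slot_not_leaf by blast

lemma isolated_slots_unused: "isolated_slots c \<subseteq> slots - used_slots"
  unfolding isolated_slots_def using used_slot_target_has_col_nbr by blast

lemma switch_slots_unused: "switch_slots c c' \<subseteq> slots - used_slots"
  unfolding switch_slots_def by blast

lemma card_leaf_slots:
  assumes "has_two_leaves c"
  shows "2 * (card V - 2) \<le> card (leaf_slots c)"
proof -
  obtain x1 x2 where x: "x1 \<noteq> x2" "card (col_nbrs c x1) = 1" "card (col_nbrs c x2) = 1"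
    using assms unfolding has_two_leaves_def by blast
  obtain u1 u2 where u: "col_nbrs c x1 = {u1}" "col_nbrs c x2 = {u2}"
    using x(2,3) by (auto simp: card_1_singleton_iff)
  have e: "{u1, x1} \<in> E" "col {u1, x1} = c" "{u2, x2} \<in> E" "col {u2, x2} = c"
    using u by (auto simp: mem_col_nbrs_iff insert_commute)
  define S where "S u x = {(u, x)} \<times> (V - {u, x})" for u x
  have card_S: "card (S u x) = card V - 2" if "{u, x} \<in> E" for u x
    using edge_endpoints[OF that] finite_V by (simp add: S_def card_cartesian_product card_Diff_subset)
  have "S u1 x1 \<subseteq> leaf_slots c" "S u2 x2 \<subseteq> leaf_slots c"
    using e u unfolding S_def leaf_slots_def slots_def by auto
  moreover have "S u1 x1 \<inter> S u2 x2 = {}" using x(1) by (auto simp: S_def)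
  moreover have "finite (leaf_slots c)"
    by (rule finite_subset[OF leaf_slots_unused]) (simp add: finite_slots)
  ultimately have "card (S u1 x1) + card (S u2 x2) \<le> card (leaf_slots c)"
    by (intro card_add_le_of_disjoint_subsets)
  then show ?thesis using card_S e by simp
qed

lemma card_isolated_slots:
  assumes "c \<in> col ` E" "\<not> has_two_leaves c" "\<not> spanning c"
  shows "2 * (card V - 2) \<le> card (isolated_slots c)"
proof -
  obtain z where z: "z \<in> V" "col_nbrs c z = {}"
    using assms(3) unfolding spanning_def by blast
  obtain e where "e \<in> E" "col e = c" using assms(1) by blast
  moreover obtain a b where "e = {a, b}"
    using \<open>e \<in> E\<close> simple unfolding simple_graph_def by (meson card_2_iff)
  ultimately have ab: "b \<in> col_nbrs c a" "a \<in> col_nbrs c b"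
    by (auto simp: mem_col_nbrs_iff insert_commute)
  define M where "M = {w \<in> V. col_nbrs c w = {}}"
  define W where "W = V - M"
  have "M \<subseteq> V" "finite M" using finite_V by (auto simp: M_def)
  have "z \<in> M" using z by (simp add: M_def)
  have "a \<in> W" "b \<in> W" "a \<noteq> b"
    using ab col_nbrs_subset edge_endpoints by (auto simp: W_def M_def mem_col_nbrs_iff)
  have "card M + card W = card V"
    using \<open>M \<subseteq> V\<close> \<open>finite M\<close> finite_V unfolding W_def by (metis card_Diff_subset card_mono le_add_diff_inverse)
  have "1 \<le> card M" using \<open>z \<in> M\<close> \<open>finite M\<close> by (metis One_nat_def Suc_leI card_gt_0_iff empty_iff)
  have "2 \<le> card W"
    using \<open>a \<in> W\<close> \<open>b \<in> W\<close> \<open>a \<noteq> b\<close> finite_V unfolding W_def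
    by (metis card_2_iff card_mono empty_subsetI finite_Diff insert_subset)
  define G1 where "G1 = {(a, b), (b, a)} \<times> (M - {z})"
  define G2 where "G2 = (\<lambda>(y, u). ((u, y), z)) ` Sigma W (col_nbrs c)"
  have "G1 \<subseteq> isolated_slots c"
    using ab \<open>a \<in> W\<close> \<open>b \<in> W\<close>
    by (auto simp: G1_def isolated_slots_def slots_def M_def W_def mem_col_nbrs_iff insert_commute)
  moreover have "G2 \<subseteq> isolated_slots c"
  proof (clarsimp simp: G2_def)
    fix y u assume "y \<in> W" "u \<in> col_nbrs c y"
    moreover have "z \<noteq> u" using z \<open>u \<in> col_nbrs c y\<close> by (auto simp: mem_col_nbrs_iff insert_commute)
    moreover have "z \<noteq> y" using \<open>y \<in> W\<close> \<open>z \<in> M\<close> by (auto simp: W_def)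
    ultimately show "((u, y), z) \<in> isolated_slots c"
      using z by (auto simp: isolated_slots_def slots_def mem_col_nbrs_iff insert_commute)
  qed
  moreover have "G1 \<inter> G2 = {}" by (auto simp: G1_def G2_def)
  moreover have "finite (isolated_slots c)"
    by (rule finite_subset[OF isolated_slots_unused]) (simp add: finite_slots)
  ultimately have "card G1 + card G2 \<le> card (isolated_slots c)"
    by (intro card_add_le_of_disjoint_subsets)
  moreover have "card G1 = 2 * (card M - 1)"
    using \<open>a \<noteq> b\<close> \<open>finite M\<close> \<open>z \<in> M\<close> by (simp add: G1_def card_cartesian_product)
  moreover have "card G2 = (\<Sum>y\<in>W. card (col_nbrs c y))"
  proof -
    have "inj_on (\<lambda>(y, u). ((u, y), z)) (Sigma W (col_nbrs c))" by (auto intro: inj_onI)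
    then show ?thesis
      using finite_V finite_col_nbrs by (simp add: G2_def card_image W_def)
  qed
  moreover have "2 * card W - 1 \<le> (\<Sum>y\<in>W. card (col_nbrs c y))"
    using assms(2) by (rule sum_card_col_nbrs_ge) (auto simp: W_def M_def)
  ultimately show ?thesis
    using \<open>card M + card W = card V\<close> \<open>1 \<le> card M\<close> \<open>2 \<le> card W\<close> by linarith
qed

lemma card_switch_slots:
  assumes "spanning c" "spanning c'" "c \<noteq> c'" "\<not> has_two_leaves c"
  shows "2 * (card V - 2) \<le> card (switch_slots c c')"
proof -
  have "\<forall>x\<in>V. \<exists>y. y \<in> col_nbrs c' x" using assms(2) unfolding spanning_def by blast
  then obtain nb where nb: "\<And>x. x \<in> V \<Longrightarrow> nb x \<in> col_nbrs c' x" by metis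
  define sw where "sw = (\<lambda>(x, y). if ((y, x), nb x) \<in> used_slots then ((nb x, x), y) else ((y, x), nb x))"
  have sw_in: "sw (x, y) \<in> switch_slots c c'" and sw_cases: "sw (x, y) \<in> {((y, x), nb x), ((nb x, x), y)}"
    and nb_ne: "nb x \<noteq> y"
    if "x \<in> V" "y \<in> col_nbrs c x" for x y
  proof -
    have e: "{x, y} \<in> E" "col {x, y} = c" "{x, nb x} \<in> E" "col {x, nb x} = c'"
      using that nb by (auto simp: mem_col_nbrs_iff)
    then show "nb x \<noteq> y" using assms(3) by auto
    have "\<not> (((y, x), nb x) \<in> used_slots \<and> ((nb x, x), y) \<in> used_slots)"
      using used_slot_pair_same_colour[of y x "nb x"] e assms(3) by (auto simp: insert_commute)
    moreover have "((y, x), nb x) \<in> slots" "((nb x, x), y) \<in> slots"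
      using e edge_endpoints \<open>nb x \<noteq> y\<close> by (auto simp: slots_def insert_commute)
    ultimately show "sw (x, y) \<in> switch_slots c c'"
      using e by (auto simp: sw_def switch_slots_def insert_commute)
    show "sw (x, y) \<in> {((y, x), nb x), ((nb x, x), y)}" by (simp add: sw_def)
  qed
  have "inj_on sw (Sigma V (col_nbrs c))"
  proof (rule inj_onI, clarify)
    fix x y x' y' assume "x \<in> V" "y \<in> col_nbrs c x" "x' \<in> V" "y' \<in> col_nbrs c x'"
      and "sw (x, y) = sw (x', y')"
    then show "x = x' \<and> y = y'"
      using sw_cases[of x y] sw_cases[of x' y'] nb_ne[of x y] nb_ne[of x' y'] by auto
  qed
  moreover have "sw ` Sigma V (col_nbrs c) \<subseteq> switch_slots c c'" using sw_in by auto
  moreover have "finite (switch_slots c c')"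
    by (rule finite_subset[OF switch_slots_unused]) (simp add: finite_slots)
  ultimately have "card (Sigma V (col_nbrs c)) \<le> card (switch_slots c c')"
    by (rule card_inj_on_le)
  moreover have "2 * card V - 1 \<le> (\<Sum>x\<in>V. card (col_nbrs c x))"
    using assms(4) by (rule sum_card_col_nbrs_ge) (use assms(1) in \<open>auto simp: spanning_def\<close>)
  ultimately show ?thesis
    using finite_V finite_col_nbrs by simp
qed

definition colour_slots :: "'c \<Rightarrow> 'c \<Rightarrow> (('a \<times> 'a) \<times> 'a) set" where
  "colour_slots c0 c =
     (if has_two_leaves c then leaf_slots c else if spanning c then switch_slots c c0
      else isolated_slots c)"

lemma colour_slots_unused: "colour_slots c0 c \<subseteq> slots - used_slots"
  using leaf_slots_unused switch_slots_unused isolated_slots_unused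
  by (simp add: colour_slots_def)

lemma finite_colour_slots: "finite (colour_slots c0 c)"
  by (rule finite_subset[OF colour_slots_unused]) (simp add: finite_slots)

lemma card_colour_slots:
  assumes "c \<in> col ` E" "c \<noteq> c0" "spanning c \<Longrightarrow> spanning c0"
  shows "2 * (card V - 2) \<le> card (colour_slots c0 c)"
  using card_leaf_slots card_switch_slots[OF _ assms(3) assms(2)] card_isolated_slots[OF assms(1)]
  by (simp add: colour_slots_def)

lemma colour_slots_colours:
  assumes "((u, x), v) \<in> colour_slots c0 c"
  shows "col {u, x} = c \<or> {col {u, x}, col {x, v}} = {c, c0}"
  using assms
  by (auto simp: colour_slots_def leaf_slots_def switch_slots_def isolated_slots_def split: if_splits)

lemma colour_slots_disjoint:
  assumes "c \<noteq> c0" "c' \<noteq> c0" "c \<noteq> c'"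
  shows "colour_slots c0 c \<inter> colour_slots c0 c' = {}"
proof -
  have False if "((u, x), v) \<in> colour_slots c0 c" "((u, x), v) \<in> colour_slots c0 c'" for u x v
    using colour_slots_colours[OF that(1)] colour_slots_colours[OF that(2)] assms
    by (auto simp: doubleton_eq_iff)
  then show ?thesis by auto
qed

lemma weight_bound: "weight V f + (card V - 2) * (card (col ` E) - 1) \<le> card E * (card V - 2)"
proof -
  obtain c0 where c0: "\<And>c. c \<in> col ` E \<Longrightarrow> spanning c \<Longrightarrow> spanning c0"
    by (cases "\<exists>c\<in>col ` E. spanning c") auto
  define C where "C = col ` E - {c0}"
  define U where "U = (\<Union>c\<in>C. colour_slots c0 c)"
  define k where "k = card V - 2"
  have "finite C" using finite_E by (simp add: C_def)
  have "card (col ` E) - 1 \<le> card C"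
    unfolding C_def by (simp add: card_Diff_singleton_if)
  then have "k * (card (col ` E) - 1) \<le> k * card C" by (rule mult_le_mono2)
  have "2 * (k * card C) = (\<Sum>c\<in>C. 2 * k)" by simp
  also have "\<dots> \<le> (\<Sum>c\<in>C. card (colour_slots c0 c))"
    using card_colour_slots c0 by (intro sum_mono) (auto simp: C_def k_def)
  also have "\<dots> = card U"
    unfolding U_def using \<open>finite C\<close> finite_colour_slots colour_slots_disjoint
    by (intro card_UN_disjoint[symmetric]) (auto simp: C_def)
  finally have "2 * (k * card C) \<le> card U" .
  moreover have "card used_slots + card U \<le> card slots"
    using colour_slots_unused used_slots_subset finite_slots
    by (intro card_add_le_of_disjoint_subsets) (auto simp: U_def)
  moreover have "card slots = 2 * (card E * k)" using card_slots by (simp add: k_def)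
  ultimately have "weight V f + k * (card (col ` E) - 1) \<le> card E * k"
    using card_used_slots \<open>k * (card (col ` E) - 1) \<le> k * card C\<close> by linarith
  then show ?thesis by (simp add: k_def)
qed

end

lemma obtain_mono_path_system:
  assumes "simple_graph V E"
    and "\<And>u v. u \<in> V \<Longrightarrow> v \<in> V \<Longrightarrow> u \<noteq> v \<Longrightarrow>
           has_disjoint_mono_super_paths E col u v (f {u, v})"
  obtains paths where "mono_path_system V E col f paths"
proof -
  obtain paths where
    "\<And>u v. u \<in> V \<Longrightarrow> v \<in> V \<Longrightarrow> u \<noteq> v \<Longrightarrow>
       disjoint_mono_super_paths E col u v (f {u, v}) (paths u v)"
    "\<And>u v. u \<noteq> v \<Longrightarrow> paths v u = (\<lambda>i. rev (paths u v i))"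
  proof (rule obtain_symmetric_choice
      [where Q = "\<lambda>u v P. disjoint_mono_super_paths E col u v (f {u, v}) P"
         and g = "\<lambda>P i. rev (P i)"])
    show "\<exists>P. disjoint_mono_super_paths E col u v (f {u, v}) P"
      if "u \<in> V" "v \<in> V" "u \<noteq> v" for u v
      using assms(2)[OF that] by (simp add: has_disjoint_mono_super_paths_iff)
    show "disjoint_mono_super_paths E col v u (f {v, u}) (\<lambda>i. rev (P i))"
      if "disjoint_mono_super_paths E col u v (f {u, v}) P" for u v P
      using disjoint_mono_super_paths_rev[OF that] by (simp add: insert_commute)
    show "(\<lambda>i. rev (rev (P i))) = P" for P :: "nat \<Rightarrow> 'a list" by simp
  qed (rule that)
  with assms(1) show ?thesis
    by (intro that) unfold_locales
qed

theorem theorem2p10: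
  fixes V :: "'a set" and E :: "'a set set" and col :: "'a set \<Rightarrow> 'c"
    and f :: "'a set \<Rightarrow> nat" and n r :: nat
  assumes "simple_graph V E"
    and "card V = n" and "n \<ge> 3"
    and "card (col ` E) = r"
    and "\<And>u v. u \<in> V \<Longrightarrow> v \<in> V \<Longrightarrow> u \<noteq> v \<Longrightarrow>
           has_disjoint_mono_super_paths E col u v (f {u, v})"
  shows "int (card E) \<ge> \<lceil>real (weight V f) / real (n - 2)\<rceil> + int r - 1"
proof -
  obtain paths where "mono_path_system V E col f paths"
    using assms(1,5) by (rule obtain_mono_path_system)
  then interpret mono_path_system V E col f paths .
  have "weight V f + (n - 2) * (r - 1) \<le> card E * (n - 2)"
    using weight_bound assms(2,4) by simp
  with assms(3) show ?thesis
    by (intro ceiling_divide_bound) (simp_all add: mult.commute)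
qed

end
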